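(* Let $A\in M_m(R)$ be non-singular with $m\in\{2,3\}$, and write $f_A(x)=\sum_{k=0}^m a_kx^k$, $f_{A^\nabla}(x)=\sum_{k=0}^m b_kx^k$. Then $\det(A)f_{A^\nabla}(x)\models_{gs}x^mf_A(x^{-1})$, i.e. $\det(A)b_k\models_{gs}a_{m-k}$ for all $k$, and when $m=2$ equality $\det(A)f_{A^\nabla}(x)=x^2f_A(x^{-1})$ holds.
   Context: Supertropical semiring $R=T\cup G\cup\{-\infty\}$: $T=\mathcal G$ an ordered abelian group (tangible), $G=\{a^\nu\}$ a copy (ghost); $a+b$ is the element of larger $\nu$-value if the $\nu$-values differ and $a^\nu$ if equal; multiplication adds $\nu$-values, is ghost if a factor is ghost, $-\infty$ absorbing; $0_R=-\infty$, $1_R=0$. Ghost surpassing: $a\models_{gs}b$ iff $a=b$, or $a\in G$ with $\nu$-value of $a$ $\geq$ that of $b$; for polynomials it is coefficientwise. $\det(A)=\sum_{\sigma}\prod_i a_{i,\sigma(i)}$; non-singular iff $\det(A)\in T$; $\operatorname{adj}(A)_{i,j}=\det(A_{j,i})$; $A^\nabla=\det(A)^{-1}\operatorname{adj}(A)$. $f_M(x)=\det(xI+M)$ has $x^k$-coefficient the sum of determinants of all $(m-k)\times(m-k)$ principal submatrices of $M$; $x^mf_A(x^{-1})$ denotes $\sum_{k=0}^m a_{m-k}x^k$. *)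

theory Defs
  imports "HOL-Combinatorics.Permutations"
begin

text \<open>NegInf is -infinity (the zero of R), Tan g tangible, Gh g the ghost copy g^nu.\<close>
datatype 'g st = NegInf | Tan 'g | Gh 'g

fun stval :: "'g st \<Rightarrow> 'g" where
  "stval (Tan g) = g" | "stval (Gh g) = g" | "stval NegInf = undefined"

definition tangible :: "'g st \<Rightarrow> bool" where
  "tangible a \<longleftrightarrow> (\<exists>g. a = Tan g)"

instantiation st :: (linordered_ab_group_add) comm_monoid_add
begin
definition zero_st :: "'a st" where "zero_st = NegInf"
fun plus_st :: "'a st \<Rightarrow> 'a st \<Rightarrow> 'a st" where
  "plus_st NegInf b = b"
| "plus_st a NegInf = a"
| "plus_st a b = (if stval a < stval b then b else if stval b < stval a then a
                  else Gh (stval a))"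
instance
proof
  fix a b c :: "'a st"
  show "a + b + c = a + (b + c)"
    by (cases a; cases b; cases c) auto
  show "a + b = b + a"
    by (cases a; cases b) auto
  show "0 + a = a" by (simp add: zero_st_def)
qed
end

instantiation st :: (linordered_ab_group_add) comm_monoid_mult
begin
definition one_st :: "'a st" where "one_st = Tan 0"
fun times_st :: "'a st \<Rightarrow> 'a st \<Rightarrow> 'a st" where
  "times_st NegInf b = NegInf"
| "times_st a NegInf = NegInf"
| "times_st (Tan g) (Tan h) = Tan (g + h)"
| "times_st a b = Gh (stval a + stval b)"
instance
proof
  fix a b c :: "'a st"
  show "a * b * c = a * (b * c)"
    by (cases a; cases b; cases c) (auto simp: add.assoc)
  show "a * b = b * a"
    by (cases a; cases b) (auto simp: add.commute)
  show "1 * a = a" by (cases a) (auto simp: one_st_def)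
qed
end

definition gs :: "'g::linordered_ab_group_add st \<Rightarrow> 'g st \<Rightarrow> bool" where
  "gs a b \<longleftrightarrow> a = b \<or> (\<exists>g. a = Gh g \<and> (b = NegInf \<or> stval b \<le> g))"

fun tinv :: "'g::linordered_ab_group_add st \<Rightarrow> 'g st" where
  "tinv (Tan g) = Tan (- g)" | "tinv a = undefined"

section \<open>Matrices: an m x m matrix is a function on indices 0..m-1\<close>

type_synonym 'g stmat = "nat \<Rightarrow> nat \<Rightarrow> 'g st"

definition det :: "nat \<Rightarrow> 'g::linordered_ab_group_add stmat \<Rightarrow> 'g st" where
  "det m A = (\<Sum>\<sigma>\<in>{\<sigma>. \<sigma> permutes {..<m}}. \<Prod>i<m. A i (\<sigma> i))"

definition minor :: "'g stmat \<Rightarrow> nat \<Rightarrow> nat \<Rightarrow> 'g stmat" where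
  "minor A r c = (\<lambda>i j. A (if i < r then i else Suc i) (if j < c then j else Suc j))"

definition adj :: "nat \<Rightarrow> 'g::linordered_ab_group_add stmat \<Rightarrow> 'g stmat" where
  "adj m A = (\<lambda>i j. det (m - 1) (minor A j i))"

definition nabla :: "nat \<Rightarrow> 'g::linordered_ab_group_add stmat \<Rightarrow> 'g stmat" where
  "nabla m A = (\<lambda>i j. tinv (det m A) * adj m A i j)"

definition principal :: "'g stmat \<Rightarrow> nat set \<Rightarrow> 'g stmat" where
  "principal A S = (\<lambda>i j. A (sorted_list_of_set S ! i) (sorted_list_of_set S ! j))"

text \<open>k-th coefficient of f_M(x) = det(xI + M): sum of the determinants of all
  (m-k) x (m-k) principal submatrices of M.\<close>
definition charcoeff :: "nat \<Rightarrow> 'g::linordered_ab_group_add stmat \<Rightarrow> nat \<Rightarrow> 'g st" where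
  "charcoeff m M k = (\<Sum>S\<in>{S. S \<subseteq> {..<m} \<and> card S = m - k}. det (m - k) (principal M S))"

end

theory Submission
  imports Defs
begin

text \<open>Because A^nabla = det(A)^-1 adj(A), the k-th coefficient of f_{A^nabla} is det(A)^(k-m)
  times the k-th coefficient c_k of f_{adj(A)}, so it suffices to show
  c_k = det(A)^(m-k-1) a_(m-k) + (E + E) for k < m, with E = 0 when m = 2: a doubled summand
  E + E is ghost and dominates E, whence x + (E + E) |=gs x. In every dimension
  c_(m-1) = tr adj(A) = a_1. For m = 2 moreover det adj(A) = det A; for m = 3, expanding det adj(A)
  and the principal 2 x 2 minors of adj(A) gives det(A)^2 and det(A) tr(A) plus cross monomials
  that each occur exactly twice.\<close>

instance st :: (linordered_ab_group_add) comm_semiring_1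
proof
  fix a b c :: "'a st"
  show "(a + b) * c = a * c + b * c"
    by (cases a; cases b; cases c) (auto simp: add.commute)
  show "0 * a = 0" "a * 0 = 0" by (cases a; simp add: zero_st_def)+
  show "(0::'a st) \<noteq> 1" by (simp add: zero_st_def one_st_def)
qed

lemma gs_refl: "gs x x"
  by (simp add: gs_def)

lemma gs_add_double: "gs (x + (y + y)) (x::'g::linordered_ab_group_add st)"
  by (cases x; cases y) (auto simp: gs_def zero_st_def)

lemma tinv_mult_tangible: "tangible d \<Longrightarrow> tinv d * d = 1"
  by (auto simp: tangible_def one_st_def)

lemma det_cong:
  assumes "\<And>i j. i < n \<Longrightarrow> j < n \<Longrightarrow> M i j = N i j"
  shows "det n M = det n N"
  unfolding det_def
  by (intro sum.cong prod.cong refl) (metis assms lessThan_iff mem_Collect_eq permutes_in_image)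

lemma det_scale: "det n (\<lambda>i j. c * M i j) = c ^ n * det n M"
  by (simp add: det_def prod.distrib sum_distrib_left)

lemma det_0: "det 0 M = 1"
  by (simp add: det_def)

lemma det_1: "det 1 M = M 0 0"
  by (simp add: det_def lessThan_Suc sum_over_permutations_insert)

lemma det_2: "det 2 M = M 0 0 * M 1 1 + M 0 1 * M 1 0"
proof -
  have "{..<2::nat} = insert 1 (insert 0 {})" by auto
  then show ?thesis
    by (simp add: det_def sum_over_permutations_insert transpose_def add.commute mult.commute)
qed

lemma det_3:
  "det 3 M = M 0 0 * (M 1 1 * M 2 2 + M 1 2 * M 2 1) + M 0 1 * (M 1 0 * M 2 2 + M 1 2 * M 2 0)
    + M 0 2 * (M 1 0 * M 2 1 + M 1 1 * M 2 0)"
proof -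
  have "{..<3::nat} = insert 2 (insert 1 (insert 0 {}))" by auto
  then show ?thesis
    by (simp add: det_def sum_over_permutations_insert transpose_def algebra_simps)
qed

lemma charcoeff_scale: "charcoeff m (\<lambda>i j. c * M i j) k = c ^ (m - k) * charcoeff m M k"
  by (simp add: charcoeff_def principal_def det_scale[unfolded principal_def] sum_distrib_left)

lemma charcoeff_zero: "charcoeff m M 0 = det m M"
proof -
  have "{S. S \<subseteq> {..<m} \<and> card S = m} = {{..<m}}"
    using card_subset_eq[of "{..<m}"] by auto
  moreover have "det m (principal M {..<m}) = det m M"
    by (rule det_cong) (simp add: principal_def lessThan_atLeast0)
  ultimately show ?thesis by (simp add: charcoeff_def)
qed

lemma charcoeff_top: "charcoeff m M m = 1"
proof -
  have "{S. S \<subseteq> {..<m} \<and> card S = 0} = {{}}"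
    by (auto dest: finite_subset)
  then show ?thesis by (simp add: charcoeff_def det_0)
qed

lemma charcoeff_trace: "charcoeff (Suc n) M n = (\<Sum>i<Suc n. M i i)"
proof -
  have "{S. S \<subseteq> {..<Suc n} \<and> card S = 1} = (\<lambda>i. {i}) ` {..<Suc n}"
    by (auto simp: card_Suc_eq)
  then show ?thesis
    by (simp add: charcoeff_def sum.reindex principal_def det_1[unfolded One_nat_def])
qed

lemma adj_2:
  "adj 2 A 0 0 = A 1 1" "adj 2 A 0 1 = A 0 1" "adj 2 A 1 0 = A 1 0" "adj 2 A 1 1 = A 0 0"
  by (simp_all add: adj_def det_1[unfolded One_nat_def] minor_def)

lemma adj_3:
  "adj 3 A 0 0 = A 1 1 * A 2 2 + A 1 2 * A 2 1"
  "adj 3 A 0 1 = A 0 1 * A 2 2 + A 0 2 * A 2 1"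
  "adj 3 A 0 2 = A 0 1 * A 1 2 + A 0 2 * A 1 1"
  "adj 3 A 1 0 = A 1 0 * A 2 2 + A 1 2 * A 2 0"
  "adj 3 A 1 1 = A 0 0 * A 2 2 + A 0 2 * A 2 0"
  "adj 3 A 1 2 = A 0 0 * A 1 2 + A 0 2 * A 1 0"
  "adj 3 A 2 0 = A 1 0 * A 2 1 + A 1 1 * A 2 0"
  "adj 3 A 2 1 = A 0 0 * A 2 1 + A 0 1 * A 2 0"
  "adj 3 A 2 2 = A 0 0 * A 1 1 + A 0 1 * A 1 0"
  by (simp_all add: adj_def det_2 minor_def) (simp_all add: eval_nat_numeral)

lemma nth_sorted_list_of_set_remove:
  assumes "j < n"
  shows "sorted_list_of_set ({..<Suc n} - {i}) ! j = (if j < i then j else Suc j)"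
proof (cases "i < Suc n")
  case True
  define xs where "xs = [0..<i] @ [Suc i..<Suc n]"
  have "sorted xs" "distinct xs"
    by (auto simp: xs_def sorted_append)
  then have "sorted_list_of_set (set xs) = xs"
    by (simp add: sorted_list_of_set_sort_remdups distinct_remdups_id sorted_sort_id)
  moreover have "set xs = {..<Suc n} - {i}"
    using True by (auto simp: xs_def)
  ultimately have "sorted_list_of_set ({..<Suc n} - {i}) = [0..<i] @ [Suc i..<Suc n]"
    by (simp add: xs_def)
  then show ?thesis
    using assms True by (simp add: nth_append del: upt_Suc)
next
  case False
  then show ?thesis
    using assms by (simp add: lessThan_atLeast0 nth_append)
qed

lemma charcoeff_one_eq_trace_adj: "charcoeff (Suc n) M 1 = (\<Sum>i<Suc n. adj (Suc n) M i i)"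
proof -
  have subsets: "{S. S \<subseteq> {..<Suc n} \<and> card S = n} = (\<lambda>i. {..<Suc n} - {i}) ` {..<Suc n}"
  proof (intro set_eqI iffI)
    fix S assume "S \<in> {S. S \<subseteq> {..<Suc n} \<and> card S = n}"
    then have "S \<subseteq> {..<Suc n}" "card ({..<Suc n} - S) = 1"
      by (auto simp: card_Diff_subset finite_subset)
    then show "S \<in> (\<lambda>i. {..<Suc n} - {i}) ` {..<Suc n}"
      by (auto simp: card_1_singleton_iff)
  qed auto
  have "inj_on (\<lambda>i. {..<Suc n} - {i}) {..<Suc n}"
    by (auto simp: inj_on_def)
  moreover have "det n (principal M ({..<Suc n} - {i})) = adj (Suc n) M i i" for i
    by (auto simp: adj_def minor_def principal_def nth_sorted_list_of_set_remove intro: det_cong)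
  ultimately show ?thesis
    by (simp add: charcoeff_def subsets sum.reindex)
qed

text \<open>Lemmas with the numeral index 1 are applied with One_nat_def removed from the simp set:
  that default simp rule would rewrite 1 to Suc 0 in the goal before they could fire.\<close>

lemma charcoeff_adj_trace: "charcoeff (Suc n) (adj (Suc n) M) n = charcoeff (Suc n) M 1"
  by (simp add: charcoeff_trace charcoeff_one_eq_trace_adj del: One_nat_def)

lemma det_adj_2: "det 2 (adj 2 A) = det 2 A"
  by (simp add: det_2 adj_2 mult.commute del: One_nat_def)

lemma det_adj_3: "\<exists>E. det 3 (adj 3 A) = det 3 A ^ 2 + (E + E)"
proof
  let ?E = "A 0 1 * A 0 2 * A 1 0 * A 1 1 * A 2 0 * A 2 2 + A 0 0 * A 0 1 * A 1 0 * A 1 2 * A 2 1 * A 2 2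
    + A 0 0 * A 0 2 * A 1 1 * A 1 2 * A 2 0 * A 2 1 + A 0 1 * A 0 2 * A 1 0 * A 1 2 * A 2 0 * A 2 1
    + A 0 0 * A 0 1 * A 1 1 * A 1 2 * A 2 0 * A 2 2 + A 0 0 * A 0 2 * A 1 0 * A 1 1 * A 2 1 * A 2 2"
  show "det 3 (adj 3 A) = det 3 A ^ 2 + (?E + ?E)"
    by (simp add: det_3 adj_3 power2_eq_square algebra_simps del: One_nat_def)
qed

lemma charcoeff_1_adj_3: "\<exists>E. charcoeff 3 (adj 3 A) 1 = det 3 A * charcoeff 3 A 2 + (E + E)"
proof
  let ?E = "A 0 2 * A 1 2 * A 2 0 * A 2 1 + A 0 1 * A 1 0 * A 1 2 * A 2 1 + A 0 1 * A 0 2 * A 1 0 * A 2 0"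
  have "charcoeff 3 M 2 = M 0 0 + M 1 1 + M 2 2" for M :: "'a::linordered_ab_group_add stmat"
    using charcoeff_trace[of 2 M] by (simp add: eval_nat_numeral add.assoc)
  moreover have "charcoeff 3 M 1 = adj 3 M 0 0 + adj 3 M 1 1 + adj 3 M 2 2"
    for M :: "'a::linordered_ab_group_add stmat"
    using charcoeff_one_eq_trace_adj[of 2 M] by (simp add: eval_nat_numeral add.assoc)
  ultimately show "charcoeff 3 (adj 3 A) 1 = det 3 A * charcoeff 3 A 2 + (?E + ?E)"
    by (simp add: det_3 adj_3 algebra_simps del: One_nat_def)
qed

lemma charcoeff_adj_2:
  assumes "k < 2"
  shows "charcoeff 2 (adj 2 A) k = det 2 A ^ (1 - k) * charcoeff 2 A (2 - k)"
proof -
  have "charcoeff 2 (adj 2 A) 0 = det 2 A ^ 1 * charcoeff 2 A 2"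
    by (simp add: charcoeff_zero charcoeff_top det_adj_2)
  moreover have "charcoeff 2 (adj 2 A) 1 = det 2 A ^ 0 * charcoeff 2 A 1"
    using charcoeff_adj_trace[of 1 A] by (simp add: numeral_2_eq_2)
  moreover have "k = 0 \<or> k = 1"
    using assms by arith
  ultimately show ?thesis
    by auto
qed

lemma charcoeff_adj_3:
  assumes "k < 3"
  shows "\<exists>E. charcoeff 3 (adj 3 A) k = det 3 A ^ (2 - k) * charcoeff 3 A (3 - k) + (E + E)"
proof -
  have "\<exists>E. charcoeff 3 (adj 3 A) 0 = det 3 A ^ 2 * charcoeff 3 A 3 + (E + E)"
    using det_adj_3 by (simp add: charcoeff_zero charcoeff_top)
  moreover have "\<exists>E. charcoeff 3 (adj 3 A) 1 = det 3 A ^ 1 * charcoeff 3 A 2 + (E + E)"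
    using charcoeff_1_adj_3 by simp
  moreover have "\<exists>E. charcoeff 3 (adj 3 A) 2 = det 3 A ^ 0 * charcoeff 3 A 1 + (E + E)"
    using charcoeff_adj_trace[of 2 A] by (intro exI[of _ 0]) (simp add: numeral_3_eq_3 numeral_2_eq_2)
  moreover have "k = 0 \<or> k = 1 \<or> k = 2"
    using assms by arith
  ultimately show ?thesis
    by (elim disjE) auto
qed

lemma charcoeff_nabla_of_charcoeff_adj:
  assumes "tangible (det m A)" "k < m"
    and "charcoeff m (adj m A) k = det m A ^ (m - Suc k) * charcoeff m A (m - k) + (E + E)"
  shows "det m A * charcoeff m (nabla m A) k
    = charcoeff m A (m - k) + (det m A * tinv (det m A) ^ (m - k) * E + det m A * tinv (det m A) ^ (m - k) * E)"
proof -
  define d where "d = det m A"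
  define t where "t = tinv d"
  have td: "t * d = 1"
    using assms(1) by (simp add: d_def t_def tinv_mult_tangible)
  have "m - k = Suc (m - Suc k)"
    using assms(2) by arith
  moreover have "charcoeff m (nabla m A) k = t ^ (m - k) * charcoeff m (adj m A) k"
    by (simp add: nabla_def charcoeff_scale t_def d_def)
  moreover have "charcoeff m (adj m A) k = d ^ (m - Suc k) * charcoeff m A (m - k) + (E + E)"
    using assms(3) by (simp add: d_def)
  ultimately have "d * charcoeff m (nabla m A) k
      = (t * d) ^ Suc (m - Suc k) * charcoeff m A (m - k) + (d * t ^ (m - k) * E + d * t ^ (m - k) * E)"
    by (simp add: algebra_simps power_mult_distrib)
  then show ?thesis
    unfolding t_def[symmetric] d_def[symmetric] by (simp add: td)
qed

theorem mainTheorem11: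
  fixes A :: "'g::linordered_ab_group_add stmat" and m :: nat
  assumes "m \<in> {2, 3}"
    and "tangible (det m A)"
  shows "(\<forall>k\<le>m. gs (det m A * charcoeff m (nabla m A) k) (charcoeff m A (m - k)))
       \<and> (m = 2 \<longrightarrow> (\<forall>k\<le>m. det m A * charcoeff m (nabla m A) k = charcoeff m A (m - k)))"
proof -
  have top: "det m A * charcoeff m (nabla m A) m = charcoeff m A (m - m)"
    by (simp add: charcoeff_top charcoeff_zero)
  from assms(1) consider (two) "m = 2" | (three) "m = 3"
    by blast
  then show ?thesis
  proof cases
    case two
    have "det m A * charcoeff m (nabla m A) k = charcoeff m A (m - k)" if "k \<le> m" for k
    proof (cases "k = m")
      case False
      then show ?thesis
        using charcoeff_nabla_of_charcoeff_adj[of m A k 0] charcoeff_adj_2[of k A] assms(2) that two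
        by simp
    qed (simp add: top)
    then show ?thesis
      using two by (simp add: gs_refl)
  next
    case three
    have "gs (det m A * charcoeff m (nabla m A) k) (charcoeff m A (m - k))" if "k \<le> m" for k
    proof (cases "k = m")
      case False
      with that have k: "k < m"
        by simp
      obtain E where
        "charcoeff m (adj m A) k = det m A ^ (m - Suc k) * charcoeff m A (m - k) + (E + E)"
        using charcoeff_adj_3[of k A] k three by auto
      then have "det m A * charcoeff m (nabla m A) k = charcoeff m A (m - k)
          + (det m A * tinv (det m A) ^ (m - k) * E + det m A * tinv (det m A) ^ (m - k) * E)"
        by (rule charcoeff_nabla_of_charcoeff_adj[OF assms(2) k])
      then show ?thesis
        by (simp add: gs_add_double)
    qed (simp add: top gs_refl)
    then show ?thesis
      using three by simp
  qed
qed
end
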